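(* Consider the system of ordinary differential equations \[ \dot u=r_{1}u(1-u)-a_{12}uv-a_{13}uw,\qquad \dot v=r_{2}v(1-v)+a_{21}uv,\qquad \dot w=-\mu w+a_{31}uw, \] with all parameters $r_1,r_2,\mu,a_{12},a_{13},a_{21},a_{31}$ positive. Then every solution with nonnegative initial data is bounded for $t\ge0$.
   Context: Solutions starting in the nonnegative orthant remain nonnegative. *)

theory Defs
  imports Complex_Main
begin

end

theory Submission
  imports Defs "HOL-Analysis.Analysis"
begin

text \<open>Each equation has the form \<open>x' = x \<cdot> g(t)\<close> with \<open>g\<close> continuous, so
  \<open>x(t) = x(0) \<cdot> exp (\<integral>\<^sub>0\<^sup>t g)\<close> and nonnegative initial data stay nonnegative.
  Then \<open>u' \<le> r\<^sub>1 u (1 - u)\<close> keeps \<open>u\<close> below \<open>max 1 (u 0)\<close>; with \<open>u \<le> M\<close>,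
  \<open>v' \<le> v (r\<^sub>2 (1 - v) + a\<^sub>2\<^sub>1 M)\<close> bounds \<open>v\<close>; finally in \<open>L = a\<^sub>3\<^sub>1 u + a\<^sub>1\<^sub>3 w\<close> the
  predation terms \<open>a\<^sub>1\<^sub>3 a\<^sub>3\<^sub>1 u w\<close> cancel, leaving \<open>L' \<le> a\<^sub>3\<^sub>1 r\<^sub>1 M - \<mu> a\<^sub>1\<^sub>3 w\<close>,
  which is negative once \<open>L\<close> is large, and this bounds \<open>w\<close>.\<close>

lemma linear_ode_solution_eq_exp_integral:
  fixes f g :: "real \<Rightarrow> real"
  assumes deriv: "\<And>s. s \<ge> a \<Longrightarrow> (f has_real_derivative f s * g s) (at s within {a..})"
    and cont: "continuous_on {a..} g" and "a \<le> t"
  shows "f t = f a * exp (integral {a..t} g)"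
proof -
  define G where "G x = integral {a..x} g" for x
  have cont_at: "continuous_on {a..t} g"
    using cont by (rule continuous_on_subset) auto
  have "((\<lambda>x. f x * exp (- G x)) has_real_derivative 0) (at x within {a..t})"
    if x: "x \<in> {a..t}" for x
  proof -
    have "(G has_real_derivative g x) (at x within {a..t})"
      unfolding G_def[abs_def] by (rule integral_has_real_derivative[OF cont_at x])
    then have "((\<lambda>x. exp (- G x)) has_real_derivative exp (- G x) * - g x) (at x within {a..t})"
      by (auto intro!: derivative_eq_intros)
    moreover have "(f has_real_derivative f x * g x) (at x within {a..t})"
      using deriv[of x] x by (auto intro: DERIV_subset)
    ultimately show ?thesis
      using DERIV_mult by fastforce
  qed
  then obtain k where "\<forall>x\<in>{a..t}. f x * exp (- G x) = k"
    using has_field_derivative_zero_constant[of "{a..t}"] by blast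
  then have "f t * exp (- G t) = f a * exp (- G a)"
    using \<open>a \<le> t\<close> by auto
  then show ?thesis
    by (simp add: G_def exp_minus field_simps)
qed

lemma linear_ode_solution_nonneg:
  fixes f g :: "real \<Rightarrow> real"
  assumes "\<And>s. s \<ge> a \<Longrightarrow> (f has_real_derivative f s * g s) (at s within {a..})"
    and "continuous_on {a..} g" and "f a \<ge> 0" and "a \<le> t"
  shows "f t \<ge> 0"
  using linear_ode_solution_eq_exp_integral[OF assms(1,2,4)] \<open>f a \<ge> 0\<close> by simp

text \<open>A barrier argument: at the last time \<open>t\<^sub>0 \<le> t\<close> with \<open>f t\<^sub>0 \<le> M\<close>, the mean value
  theorem on \<open>[t\<^sub>0, t]\<close>, where \<open>f > M\<close> and hence \<open>f' \<le> 0\<close>, contradicts \<open>f t > M\<close>.\<close>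

lemma le_bound_if_deriv_nonpos_above_bound:
  fixes f f' :: "real \<Rightarrow> real"
  assumes deriv: "\<And>s. s \<ge> a \<Longrightarrow> (f has_real_derivative f' s) (at s within {a..})"
    and nonpos: "\<And>s. s > a \<Longrightarrow> f s > M \<Longrightarrow> f' s \<le> 0"
    and "f a \<le> M" and "a \<le> t"
  shows "f t \<le> M"
proof (rule ccontr)
  assume ft: "\<not> f t \<le> M"
  define S where "S = {a..t} \<inter> f -` {..M}"
  have "continuous_on {a..t} f"
    by (rule DERIV_continuous_on[where D=f']) (auto intro: DERIV_subset deriv)
  then have "closed S"
    unfolding S_def by (rule continuous_closed_preimage) auto
  moreover have "a \<in> S" and "bdd_above S"
    using \<open>f a \<le> M\<close> \<open>a \<le> t\<close> by (auto simp: S_def intro: bdd_aboveI[of _ t])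
  ultimately have "Sup S \<in> S"
    by (intro closed_contains_Sup) auto
  define t0 where "t0 = Sup S"
  have t0: "a \<le> t0" "t0 \<le> t" "f t0 \<le> M"
    using \<open>Sup S \<in> S\<close> by (auto simp: S_def t0_def)
  have above: "f s > M" if "t0 < s" "s \<le> t" for s
  proof (rule ccontr)
    assume "\<not> f s > M"
    then have "s \<in> S" using that t0 by (auto simp: S_def)
    then have "s \<le> t0" unfolding t0_def using \<open>bdd_above S\<close> by (rule cSup_upper)
    then show False using that by simp
  qed
  have "t0 < t" using t0 ft by (cases "t0 = t") auto
  have "\<exists>x\<in>{t0<..<t}. f t - f t0 = (\<lambda>h. h * f' x) (t - t0)"
  proof (rule mvt_simple[OF \<open>t0 < t\<close>])
    fix x assume "t0 \<le> x" "x \<le> t"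
    then have "(f has_real_derivative f' x) (at x within {t0..t})"
      using t0 by (intro DERIV_subset[OF deriv]) auto
    then show "(f has_derivative (\<lambda>h. h * f' x)) (at x within {t0..t})"
      by (simp add: has_field_derivative_def mult.commute[of _ "f' x"])
  qed
  then obtain x where x: "t0 < x" "x < t" "f t - f t0 = (t - t0) * f' x" by auto
  have "f' x \<le> 0" using nonpos[of x] above[of x] x t0 by auto
  then have "(t - t0) * f' x \<le> 0" using \<open>t0 < t\<close> by (simp add: mult_nonneg_nonpos)
  then show False using x t0 ft by linarith
qed

locale three_species_system =
  fixes r1 r2 \<mu> a12 a13 a21 a31 :: real
    and u v w :: "real \<Rightarrow> real"
  assumes params_pos: "r1 > 0" "r2 > 0" "\<mu> > 0" "a12 > 0" "a13 > 0" "a21 > 0" "a31 > 0"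
    and u_deriv: "\<And>t. t \<ge> 0 \<Longrightarrow>
           (u has_real_derivative (r1 * u t * (1 - u t) - a12 * u t * v t - a13 * u t * w t))
             (at t within {0..})"
    and v_deriv: "\<And>t. t \<ge> 0 \<Longrightarrow>
           (v has_real_derivative (r2 * v t * (1 - v t) + a21 * u t * v t))
             (at t within {0..})"
    and w_deriv: "\<And>t. t \<ge> 0 \<Longrightarrow>
           (w has_real_derivative (- \<mu> * w t + a31 * u t * w t))
             (at t within {0..})"
    and initial_nonneg: "u 0 \<ge> 0" "v 0 \<ge> 0" "w 0 \<ge> 0"
begin

lemma continuous_on_u: "continuous_on {0..} u"
  and continuous_on_v: "continuous_on {0..} v"
  and continuous_on_w: "continuous_on {0..} w"
  by (rule DERIV_continuous_on, use u_deriv v_deriv w_deriv in auto)+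

lemma u_nonneg:
  assumes "t \<ge> 0"
  shows "u t \<ge> 0"
proof (rule linear_ode_solution_nonneg[where f = u and a = 0 and g = "\<lambda>s. r1 * (1 - u s) - a12 * v s - a13 * w s"])
  show "(u has_real_derivative u s * (r1 * (1 - u s) - a12 * v s - a13 * w s)) (at s within {0..})"
    if "s \<ge> 0" for s
    by (rule DERIV_cong[OF u_deriv[OF that]]) (simp add: algebra_simps)
qed (auto intro!: continuous_intros continuous_on_u continuous_on_v continuous_on_w
      simp: initial_nonneg assms)

lemma v_nonneg:
  assumes "t \<ge> 0"
  shows "v t \<ge> 0"
proof (rule linear_ode_solution_nonneg[where f = v and a = 0 and g = "\<lambda>s. r2 * (1 - v s) + a21 * u s"])
  show "(v has_real_derivative v s * (r2 * (1 - v s) + a21 * u s)) (at s within {0..})"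
    if "s \<ge> 0" for s
    by (rule DERIV_cong[OF v_deriv[OF that]]) (simp add: algebra_simps)
qed (auto intro!: continuous_intros continuous_on_u continuous_on_v simp: initial_nonneg assms)

lemma w_nonneg:
  assumes "t \<ge> 0"
  shows "w t \<ge> 0"
proof (rule linear_ode_solution_nonneg[where f = w and a = 0 and g = "\<lambda>s. - \<mu> + a31 * u s"])
  show "(w has_real_derivative w s * (- \<mu> + a31 * u s)) (at s within {0..})"
    if "s \<ge> 0" for s
    by (rule DERIV_cong[OF w_deriv[OF that]]) (simp add: algebra_simps)
qed (auto intro!: continuous_intros continuous_on_u simp: initial_nonneg assms)

lemma u_le_max_1_initial: "t \<ge> 0 \<Longrightarrow> u t \<le> max 1 (u 0)"
proof (rule le_bound_if_deriv_nonpos_above_bound[OF u_deriv])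
  fix s :: real assume s: "s > 0" "u s > max 1 (u 0)"
  have "r1 * u s * (1 - u s) \<le> 0"
    using s params_pos by (simp add: mult_nonneg_nonpos)
  moreover have "a12 * u s * v s \<ge> 0" "a13 * u s * w s \<ge> 0"
    using s params_pos u_nonneg v_nonneg w_nonneg by simp_all
  ultimately show "r1 * u s * (1 - u s) - a12 * u s * v s - a13 * u s * w s \<le> 0"
    by linarith
qed auto

lemma v_bounded: "\<exists>B. \<forall>t\<ge>0. v t \<le> B"
proof -
  define M where "M = max 1 (u 0)"
  define B where "B = max (1 + a21 * M / r2) (v 0)"
  have "v t \<le> B" if "t \<ge> 0" for t
  proof (rule le_bound_if_deriv_nonpos_above_bound[OF v_deriv])
    fix s :: real assume s: "s > 0" "v s > B"
    then have "r2 * v s > r2 + a21 * M"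
      using params_pos by (simp add: B_def field_simps)
    moreover have "a21 * u s \<le> a21 * M"
      using u_le_max_1_initial[of s] s params_pos by (simp add: M_def)
    ultimately have "r2 * (1 - v s) + a21 * u s \<le> 0"
      by (simp add: algebra_simps)
    then have "v s * (r2 * (1 - v s) + a21 * u s) \<le> 0"
      using v_nonneg[of s] s by (simp add: mult_nonneg_nonpos)
    then show "r2 * v s * (1 - v s) + a21 * u s * v s \<le> 0"
      by (simp add: algebra_simps)
  qed (use that in \<open>auto simp: B_def\<close>)
  then show ?thesis by blast
qed

lemma w_bounded: "\<exists>B. \<forall>t\<ge>0. w t \<le> B"
proof -
  define M where "M = max 1 (u 0)"
  define L where "L s = a31 * u s + a13 * w s" for s
  define K where "K = max (a31 * M + a31 * r1 * M / \<mu>) (L 0)"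
  have L_deriv: "(L has_real_derivative
      a31 * (r1 * u s * (1 - u s) - a12 * u s * v s - a13 * u s * w s)
      + a13 * (- \<mu> * w s + a31 * u s * w s)) (at s within {0..})" if "s \<ge> 0" for s
    unfolding L_def[abs_def] by (intro DERIV_add DERIV_cmult u_deriv w_deriv that)
  have L_le: "L t \<le> K" if "t \<ge> 0" for t
  proof (rule le_bound_if_deriv_nonpos_above_bound[OF L_deriv])
    fix s :: real assume s: "s > 0" "L s > K"
    have u_le: "u s \<le> M"
      using u_le_max_1_initial[of s] s by (simp add: M_def)
    then have "a31 * u s \<le> a31 * M"
      using params_pos by simp
    then have "a13 * w s > a31 * r1 * M / \<mu>"
      using s(2) unfolding L_def K_def by linarith
    then have "a13 * \<mu> * w s > a31 * r1 * M"
      using params_pos by (simp add: field_simps)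
    moreover have "a31 * r1 * u s \<le> a31 * r1 * M"
      using u_le params_pos by simp
    moreover have "a31 * r1 * (u s * u s) \<ge> 0" "a31 * a12 * (u s * v s) \<ge> 0"
      using params_pos u_nonneg v_nonneg s by simp_all
    moreover have "a31 * (r1 * u s * (1 - u s) - a12 * u s * v s - a13 * u s * w s)
        + a13 * (- \<mu> * w s + a31 * u s * w s)
      = a31 * r1 * u s - a31 * r1 * (u s * u s) - a31 * a12 * (u s * v s) - a13 * \<mu> * w s"
      by (simp add: algebra_simps)
    ultimately show "a31 * (r1 * u s * (1 - u s) - a12 * u s * v s - a13 * u s * w s)
        + a13 * (- \<mu> * w s + a31 * u s * w s) \<le> 0"
      by linarith
  qed (use that in \<open>auto simp: K_def\<close>)
  have "w t \<le> K / a13" if "t \<ge> 0" for t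
  proof -
    have "a31 * u t \<ge> 0"
      using u_nonneg[OF that] params_pos by simp
    then have "a13 * w t \<le> K"
      using L_le[OF that] unfolding L_def by linarith
    then show ?thesis
      using params_pos by (simp add: field_simps)
  qed
  then show ?thesis by blast
qed

end

theorem lemma1:
  fixes r1 r2 \<mu> a12 a13 a21 a31 :: real
    and u v w :: "real \<Rightarrow> real"
  assumes "r1 > 0" "r2 > 0" "\<mu> > 0" "a12 > 0" "a13 > 0" "a21 > 0" "a31 > 0"
    and "\<And>t. t \<ge> 0 \<Longrightarrow>
           (u has_real_derivative (r1 * u t * (1 - u t) - a12 * u t * v t - a13 * u t * w t))
             (at t within {0..})"
    and "\<And>t. t \<ge> 0 \<Longrightarrow>
           (v has_real_derivative (r2 * v t * (1 - v t) + a21 * u t * v t))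
             (at t within {0..})"
    and "\<And>t. t \<ge> 0 \<Longrightarrow>
           (w has_real_derivative (- \<mu> * w t + a31 * u t * w t))
             (at t within {0..})"
    and "u 0 \<ge> 0" "v 0 \<ge> 0" "w 0 \<ge> 0"
  shows "\<exists>B. \<forall>t\<ge>0. \<bar>u t\<bar> \<le> B \<and> \<bar>v t\<bar> \<le> B \<and> \<bar>w t\<bar> \<le> B"
proof -
  interpret three_species_system r1 r2 \<mu> a12 a13 a21 a31 u v w
    using assms by unfold_locales
  obtain Bv where "\<forall>t\<ge>0. v t \<le> Bv" using v_bounded by blast
  moreover obtain Bw where "\<forall>t\<ge>0. w t \<le> Bw" using w_bounded by blast
  ultimately have "\<forall>t\<ge>0. \<bar>u t\<bar> \<le> max (max 1 (u 0)) (max Bv Bw)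
      \<and> \<bar>v t\<bar> \<le> max (max 1 (u 0)) (max Bv Bw) \<and> \<bar>w t\<bar> \<le> max (max 1 (u 0)) (max Bv Bw)"
    using u_le_max_1_initial u_nonneg v_nonneg w_nonneg by fastforce
  then show ?thesis by blast
qed

end
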